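(* Let $h:\mathbb{R}\to\mathbb{R}$ be continuous and let $u_1,u_2$ be any pair of real-valued linearly independent solutions of $u''(x)+h(x)u(x)=0$, with Wronskian $W=u'_1(x)u_2(x)-u_1(x)u'_2(x)\neq0$. Let $X_0\in\mathbb{R}$ and fix either choice of sign $\pm$. Then the map $(x,\varPhi)\mapsto(X,Y)$ given by \[ X(x,\varPhi)=X_0\pm W^{-1}\frac{\varPhi^2u_1(x)u_2(x)+u'_1(x)u'_2(x)}{\varPhi^2[u_1(x)]^2+[u'_1(x)]^2},\qquad Y(x,\varPhi)=\frac{\varPhi}{\varPhi^2[u_1(x)]^2+[u'_1(x)]^2}, \] is a local diffeomorphism from the Riemannian manifold $\mathbb{M}_h=(\mathcal{H}_0,g_h)$ to the Poincaré upper half plane $\mathbb{H}=(\mathcal{H},g_{\mathbb{H}})$, i.e. a local diffeomorphism $\mathcal{H}_0\to\mathcal{H}$ under which $g_{\mathbb{H}}$ pulls back to $g_h$.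
   Context: $\mathcal{H}=\{(X,Y)\in\mathbb{R}^2\mid Y>0\}$ with metric $g_{\mathbb{H}}=(dX^2+dY^2)/Y^2$ is the Poincaré upper half plane $\mathbb{H}$. $\mathcal{H}_0=\{(x,\varPhi)\in\mathbb{R}^2\mid\varPhi>0,\ \varPhi^2\neq h(x)\}$ with metric $g_h=\left[(h(x)-\varPhi^2)^2dx^2+d\varPhi^2\right]/\varPhi^2$ is $\mathbb{M}_h$. *)

theory Defs
  imports "HOL-Analysis.Analysis"
begin

definition upper_half_plane :: "(real \<times> real) set" where
  "upper_half_plane = {(X, Y). Y > 0}"

definition H0_set :: "(real \<Rightarrow> real) \<Rightarrow> (real \<times> real) set" where
  "H0_set h = {(x, \<Phi>). \<Phi> > 0 \<and> \<Phi>\<^sup>2 \<noteq> h x}"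

definition g_poincare :: "real \<times> real \<Rightarrow> real \<times> real \<Rightarrow> real \<times> real \<Rightarrow> real" where
  "g_poincare p v w = (fst v * fst w + snd v * snd w) / (snd p)\<^sup>2"

definition g_h :: "(real \<Rightarrow> real) \<Rightarrow> real \<times> real \<Rightarrow> real \<times> real \<Rightarrow> real \<times> real \<Rightarrow> real" where
  "g_h h p v w = ((h (fst p) - (snd p)\<^sup>2)\<^sup>2 * fst v * fst w + snd v * snd w) / (snd p)\<^sup>2"

definition C1_on :: "'a::real_normed_vector set \<Rightarrow> ('a \<Rightarrow> 'b::real_normed_vector) \<Rightarrow> bool" where
  "C1_on U f \<longleftrightarrow> (\<exists>f' :: 'a \<Rightarrow> ('a \<Rightarrow>\<^sub>L 'b).
      (\<forall>x\<in>U. (f has_derivative blinfun_apply (f' x)) (at x)) \<and> continuous_on U f')"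

definition local_diffeo :: "('a::euclidean_space \<Rightarrow> 'b::euclidean_space) \<Rightarrow> 'a set \<Rightarrow> 'b set \<Rightarrow> bool" where
  "local_diffeo F S T \<longleftrightarrow> F ` S \<subseteq> T \<and>
     (\<forall>p\<in>S. \<exists>U V G. open U \<and> p \<in> U \<and> U \<subseteq> S \<and> open V \<and> V \<subseteq> T \<and>
        F ` U = V \<and> G ` V = U \<and> (\<forall>x\<in>U. G (F x) = x) \<and> (\<forall>y\<in>V. F (G y) = y) \<and>
        C1_on U F \<and> C1_on V G)"

definition pullback_metric_eq ::
  "(real \<times> real \<Rightarrow> real \<times> real) \<Rightarrow> (real \<Rightarrow> real) \<Rightarrow> (real \<times> real) set \<Rightarrow> bool" where
  "pullback_metric_eq F h S \<longleftrightarrow> (\<forall>p\<in>S. \<exists>D. (F has_derivative D) (at p) \<and>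
      (\<forall>v w. g_poincare (F p) (D v) (D w) = g_h h p v w))"

end

theory Submission
  imports Defs
begin

text \<open>Put \<open>z\<^sub>j = u\<^sub>j' + i \<Phi> u\<^sub>j\<close> and \<open>\<zeta> = z\<^sub>2 / z\<^sub>1\<close>. Then
  \<open>F = (X\<^sub>0 \<plusminus> Re \<zeta> / W, Im \<zeta> / W)\<close>, and since the Wronskian is constant,
  \<open>d\<zeta> = W (k dx + i d\<Phi>) / z\<^sub>1\<^sup>2\<close> with \<open>k = \<Phi>\<^sup>2 - h\<close>. So \<open>dF\<close> is the stretch
  \<open>diag(k, 1)\<close> followed by multiplication with \<open>1 / z\<^sub>1\<^sup>2\<close> and, for the minus sign, a
  reflection. It pulls \<open>|d\<zeta>|\<^sup>2 / (Im \<zeta>)\<^sup>2\<close>, the Poincare metric in the coordinates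
  \<open>(X, Y)\<close>, back to \<open>(k\<^sup>2 dx\<^sup>2 + d\<Phi>\<^sup>2) / \<Phi>\<^sup>2 = g\<^sub>h\<close>, and it is invertible exactly where
  \<open>\<Phi>\<^sup>2 \<noteq> h\<close>; the inverse function theorem does the rest.\<close>

definition mat2 :: "real \<Rightarrow> real \<Rightarrow> real \<Rightarrow> real \<Rightarrow> (real \<times> real) \<Rightarrow>\<^sub>L (real \<times> real)" where
  "mat2 a b c d = Blinfun (\<lambda>v. (a * fst v + b * snd v, c * fst v + d * snd v))"

lemma mat2_apply [simp]: "mat2 a b c d v = (a * fst v + b * snd v, c * fst v + d * snd v)"
proof -
  have "bounded_linear (\<lambda>v::real \<times> real. (a * fst v + b * snd v, c * fst v + d * snd v))"
    by (intro bounded_linear_intros)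
  then show ?thesis
    unfolding mat2_def by (simp add: bounded_linear_Blinfun_apply)
qed

lemma continuous_on_mat2 [continuous_intros]:
  fixes a b c d :: "'a::t2_space \<Rightarrow> real"
  assumes "continuous_on S a" "continuous_on S b" "continuous_on S c" "continuous_on S d"
  shows "continuous_on S (\<lambda>p. mat2 (a p) (b p) (c p) (d p))"
  by (rule continuous_on_blinfun_componentwise)
     (auto simp: Basis_prod_def intro!: continuous_intros assms)

lemma mat2_compose:
  "mat2 a b c d o\<^sub>L mat2 a' b' c' d' =
     mat2 (a * a' + b * c') (a * b' + b * d') (c * a' + d * c') (c * b' + d * d')"
  by (rule blinfun_eqI) (simp add: algebra_simps)

lemma mat2_inverse_compose:
  assumes "a * d - b * c \<noteq> 0"
  shows "mat2 (d / (a * d - b * c)) (- b / (a * d - b * c)) (- c / (a * d - b * c)) (a / (a * d - b * c))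
           o\<^sub>L mat2 a b c d = id_blinfun"
proof -
  define \<delta> where "\<delta> = a * d - b * c"
  have "d / \<delta> * a + - b / \<delta> * c = 1" "d / \<delta> * b + - b / \<delta> * d = 0"
    "- c / \<delta> * a + a / \<delta> * c = 0" "- c / \<delta> * b + a / \<delta> * d = 1"
    using assms by (simp_all add: field_simps flip: \<delta>_def)
  then show ?thesis
    by (intro blinfun_eqI) (simp add: mat2_compose flip: \<delta>_def)
qed

lemma local_diffeo_if_invertible_derivative:
  fixes F :: "'a::euclidean_space \<Rightarrow> 'a" and J J' :: "'a \<Rightarrow> 'a \<Rightarrow>\<^sub>L 'a"
  assumes "open S" and "F ` S \<subseteq> T"
    and derF: "\<And>p. p \<in> S \<Longrightarrow> (F has_derivative J p) (at p)"
    and contJ: "continuous_on S J" and contJ': "continuous_on S J'"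
    and inv: "\<And>p. p \<in> S \<Longrightarrow> J' p o\<^sub>L J p = id_blinfun"
  shows "local_diffeo F S T"
  unfolding local_diffeo_def
proof (intro conjI ballI)
  show "F ` S \<subseteq> T" by fact
  fix p assume "p \<in> S"
  obtain U V G G' where U: "open U" "U \<subseteq> S" "p \<in> U" and "open V" "F p \<in> V"
    and hom: "homeomorphism U V F G"
    and derG: "\<And>y. y \<in> V \<Longrightarrow> (G has_derivative G' y) (at y)"
    and G': "\<And>y. y \<in> V \<Longrightarrow> G' y = inv (J (G y))"
    and bij: "\<And>y. y \<in> V \<Longrightarrow> bij (J (G y))"
    by (rule inverse_function_theorem[OF \<open>open S\<close> derF contJ \<open>p \<in> S\<close> inv[OF \<open>p \<in> S\<close>]])
       (assumption, rule that)
  have hom_facts: "F ` U = V" "G ` V = U" "\<forall>x\<in>U. G (F x) = x" "\<forall>y\<in>V. F (G y) = y"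
    "continuous_on V G"
    using hom by (simp_all add: homeomorphism_def)
  have GS: "G y \<in> S" if "y \<in> V" for y
    using hom_facts(2) U(2) that by blast
  have G'_eq: "G' y = J' (G y)" if "y \<in> V" for y
  proof -
    have "J' (G y) (J (G y) x) = x" for x
      using arg_cong[OF inv[OF GS[OF that]], of "\<lambda>A. blinfun_apply A x"] by simp
    then show ?thesis
      unfolding G'[OF that] by (rule surj_imp_inv_eq[OF bij_is_surj[OF bij[OF that]]])
  qed
  have "continuous_on V (J' \<circ> G)"
    by (intro continuous_on_compose hom_facts(5) continuous_on_subset[OF contJ'] image_subsetI GS)
  then have "C1_on V G"
    unfolding C1_on_def using derG G'_eq by (intro exI[of _ "J' \<circ> G"]) simp
  moreover have "C1_on U F"
    unfolding C1_on_def using derF U(2) continuous_on_subset[OF contJ U(2)] by blast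
  ultimately show "\<exists>U V G. open U \<and> p \<in> U \<and> U \<subseteq> S \<and> open V \<and> V \<subseteq> T \<and>
        F ` U = V \<and> G ` V = U \<and> (\<forall>x\<in>U. G (F x) = x) \<and> (\<forall>y\<in>V. F (G y) = y) \<and>
        C1_on U F \<and> C1_on V G"
    using U \<open>open V\<close> hom_facts \<open>F ` S \<subseteq> T\<close> by blast
qed

lemma local_diffeo_if_mat2_derivative:
  fixes F :: "real \<times> real \<Rightarrow> real \<times> real"
  assumes "open S" and "F ` S \<subseteq> T"
    and "\<And>p. p \<in> S \<Longrightarrow> (F has_derivative mat2 (a p) (b p) (c p) (d p)) (at p)"
    and "continuous_on S a" "continuous_on S b" "continuous_on S c" "continuous_on S d"
    and det: "\<And>p. p \<in> S \<Longrightarrow> a p * d p - b p * c p \<noteq> 0"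
  shows "local_diffeo F S T"
proof (rule local_diffeo_if_invertible_derivative[where J = "\<lambda>p. mat2 (a p) (b p) (c p) (d p)"])
  let ?\<delta> = "\<lambda>p. a p * d p - b p * c p"
  show "continuous_on S (\<lambda>p. mat2 (d p / ?\<delta> p) (- b p / ?\<delta> p) (- c p / ?\<delta> p) (a p / ?\<delta> p))"
    using det by (intro continuous_intros assms(4-7)) auto
  show "mat2 (d p / ?\<delta> p) (- b p / ?\<delta> p) (- c p / ?\<delta> p) (a p / ?\<delta> p) o\<^sub>L mat2 (a p) (b p) (c p) (d p)
          = id_blinfun" if "p \<in> S" for p
    using mat2_inverse_compose[OF det[OF that]] .
qed (use assms in \<open>auto intro!: continuous_intros\<close>)

definition conformal_jacobian :: "real \<Rightarrow> complex \<Rightarrow> real \<Rightarrow> (real \<times> real) \<Rightarrow>\<^sub>L (real \<times> real)" where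
  "conformal_jacobian s c k = mat2 (s * Re c * k) (- s * Im c) (Im c * k) (Re c)"

lemma conformal_jacobian_apply:
  "conformal_jacobian s c k v =
     (s * Re (c * Complex (k * fst v) (snd v)), Im (c * Complex (k * fst v) (snd v)))"
  by (simp add: conformal_jacobian_def algebra_simps)

lemma g_poincare_conformal_jacobian:
  assumes "s\<^sup>2 = 1"
  shows "g_poincare q (conformal_jacobian s c k v) (conformal_jacobian s c k w) =
           (cmod c)\<^sup>2 * (k\<^sup>2 * fst v * fst w + snd v * snd w) / (snd q)\<^sup>2"
proof -
  have "(s * Re c * k * fst v + - s * Im c * snd v) * (s * Re c * k * fst w + - s * Im c * snd w)
        + (Im c * k * fst v + Re c * snd v) * (Im c * k * fst w + Re c * snd w)
        = ((Re c)\<^sup>2 + (Im c)\<^sup>2) * (k\<^sup>2 * fst v * fst w + snd v * snd w)"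
    using assms by algebra
  then show ?thesis
    by (simp add: g_poincare_def conformal_jacobian_def cmod_power2)
qed

lemma has_derivative_Complex [derivative_intros]:
  assumes "(f has_derivative f') F" and "(g has_derivative g') F"
  shows "((\<lambda>x. Complex (f x) (g x)) has_derivative (\<lambda>v. Complex (f' v) (g' v))) F"
proof -
  have "((\<lambda>x. of_real (f x) + \<i> * of_real (g x)) has_derivative
          (\<lambda>v. of_real (f' v) + \<i> * of_real (g' v))) F"
    using assms by (intro derivative_intros)
  then show ?thesis
    by (simp add: Complex_eq)
qed

lemma has_derivative_compose_fst:
  assumes "(g has_real_derivative D) (at (fst p))"
  shows "((\<lambda>q. g (fst q)) has_derivative (\<lambda>v. D * fst v)) (at p within S)"
  using has_derivative_compose[OF has_derivative_fst[OF has_derivative_ident]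
      assms[unfolded has_field_derivative_def]]
  by (simp add: o_def)

definition complex_lift :: "(real \<Rightarrow> real) \<Rightarrow> (real \<Rightarrow> real) \<Rightarrow> real \<times> real \<Rightarrow> complex" where
  "complex_lift u u' p = Complex (u' (fst p)) (snd p * u (fst p))"

lemma complex_lift_has_derivative:
  assumes "\<And>x. (u has_real_derivative u' x) (at x)"
    and "\<And>x. (u' has_real_derivative (- h x * u x)) (at x)"
  shows "(complex_lift u u' has_derivative
           (\<lambda>v. Complex (- h (fst p) * u (fst p) * fst v) (snd v * u (fst p) + snd p * (u' (fst p) * fst v))))
         (at p)"
  unfolding complex_lift_def[abs_def]
  by (rule has_derivative_eq_rhs, (rule derivative_intros has_derivative_compose_fst assms)+) auto

lemma continuous_on_complex_lift:
  assumes "\<And>x. (u has_real_derivative u' x) (at x)"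
    and "\<And>x. (u' has_real_derivative (- h x * u x)) (at x)"
  shows "continuous_on S (complex_lift u u')"
  by (intro continuous_at_imp_continuous_on ballI
      has_derivative_continuous[OF complex_lift_has_derivative[OF assms]])

lemma norm_complex_lift:
  "(cmod (complex_lift u u' p))\<^sup>2 = (snd p)\<^sup>2 * (u (fst p))\<^sup>2 + (u' (fst p))\<^sup>2"
  by (simp add: complex_lift_def cmod_power2 power_mult_distrib)

lemma open_H0_set:
  assumes "continuous_on UNIV h"
  shows "open (H0_set h)"
proof -
  have "H0_set h = {p. 0 < snd p} \<inter> {p. (snd p)\<^sup>2 \<noteq> h (fst p)}"
    by (auto simp: H0_set_def)
  moreover have "continuous_on UNIV (\<lambda>p::real \<times> real. h (fst p))"
    by (rule continuous_on_compose2[OF assms continuous_on_fst[OF continuous_on_id]]) auto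
  ultimately show ?thesis
    by (auto intro!: open_Int open_Collect_less open_Collect_neq continuous_intros)
qed

locale wronskian_pair =
  fixes h u1 u2 u1' u2' :: "real \<Rightarrow> real" and W :: real
  assumes h_cont: "continuous_on UNIV h"
    and u1_deriv: "\<And>x. (u1 has_real_derivative u1' x) (at x)"
    and u1'_deriv: "\<And>x. (u1' has_real_derivative (- h x * u1 x)) (at x)"
    and u2_deriv: "\<And>x. (u2 has_real_derivative u2' x) (at x)"
    and u2'_deriv: "\<And>x. (u2' has_real_derivative (- h x * u2 x)) (at x)"
    and wronskian: "\<And>x. u1' x * u2 x - u1 x * u2' x = W"
    and W_nonzero: "W \<noteq> 0"
begin

definition zeta :: "real \<times> real \<Rightarrow> complex" where
  "zeta p = complex_lift u2 u2' p / complex_lift u1 u1' p"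

definition half_plane_map :: "real \<Rightarrow> real \<Rightarrow> real \<times> real \<Rightarrow> real \<times> real" where
  "half_plane_map s X0 p = (X0 + s * Re (zeta p) / W, Im (zeta p) / W)"

lemma complex_lift_u1_nonzero: "snd p \<noteq> 0 \<Longrightarrow> complex_lift u1 u1' p \<noteq> 0"
  using wronskian[of "fst p"] W_nonzero by (auto simp: complex_lift_def complex_eq_iff)

lemma Re_zeta:
  "Re (zeta p) = ((snd p)\<^sup>2 * u1 (fst p) * u2 (fst p) + u1' (fst p) * u2' (fst p)) /
                   ((snd p)\<^sup>2 * (u1 (fst p))\<^sup>2 + (u1' (fst p))\<^sup>2)"
  by (simp add: zeta_def complex_lift_def Re_divide power2_eq_square algebra_simps)

lemma Im_zeta: "Im (zeta p) = W * snd p / ((snd p)\<^sup>2 * (u1 (fst p))\<^sup>2 + (u1' (fst p))\<^sup>2)"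
  by (simp add: zeta_def complex_lift_def Im_divide power2_eq_square algebra_simps
      flip: wronskian[of "fst p"])

lemma half_plane_map_eq:
  "half_plane_map s X0 = (\<lambda>(x, \<Phi>).
     (X0 + s * inverse W * ((\<Phi>\<^sup>2 * u1 x * u2 x + u1' x * u2' x) / (\<Phi>\<^sup>2 * (u1 x)\<^sup>2 + (u1' x)\<^sup>2)),
      \<Phi> / (\<Phi>\<^sup>2 * (u1 x)\<^sup>2 + (u1' x)\<^sup>2)))"
  using W_nonzero by (auto simp: fun_eq_iff half_plane_map_def Re_zeta Im_zeta divide_inverse)

lemma zeta_has_derivative:
  assumes "snd p \<noteq> 0"
  shows "(zeta has_derivative (\<lambda>v. of_real W *
           (inverse ((complex_lift u1 u1' p)\<^sup>2) * Complex (((snd p)\<^sup>2 - h (fst p)) * fst v) (snd v))))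
         (at p)"
proof -
  have wronskian_lift:
    "Complex (- h (fst p) * u2 (fst p) * fst v) (snd v * u2 (fst p) + snd p * (u2' (fst p) * fst v))
       * complex_lift u1 u1' p
     - complex_lift u2 u2' p
       * Complex (- h (fst p) * u1 (fst p) * fst v) (snd v * u1 (fst p) + snd p * (u1' (fst p) * fst v))
     = of_real W * Complex (((snd p)\<^sup>2 - h (fst p)) * fst v) (snd v)" for v
    unfolding complex_lift_def wronskian[of "fst p", symmetric]
    by (simp add: complex_eq_iff algebra_simps power2_eq_square)
  show ?thesis
    unfolding zeta_def[abs_def]
    by (rule has_derivative_eq_rhs,
        rule has_derivative_divide'[OF complex_lift_has_derivative[OF u2_deriv u2'_deriv]
          complex_lift_has_derivative[OF u1_deriv u1'_deriv] complex_lift_u1_nonzero[OF assms]])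
       (simp only: wronskian_lift, simp add: divide_inverse_commute power2_eq_square mult_ac)
qed

lemma snd_half_plane_map: "snd (half_plane_map s X0 p) = snd p / (cmod (complex_lift u1 u1' p))\<^sup>2"
  using W_nonzero by (simp add: half_plane_map_def Im_zeta norm_complex_lift)

lemma half_plane_map_has_derivative:
  assumes "snd p \<noteq> 0"
  shows "(half_plane_map s X0 has_derivative
           conformal_jacobian s (inverse ((complex_lift u1 u1' p)\<^sup>2)) ((snd p)\<^sup>2 - h (fst p))) (at p)"
  unfolding half_plane_map_def[abs_def]
  using W_nonzero
  by (auto intro!: derivative_eq_intros zeta_has_derivative[OF assms] simp: fun_eq_iff conformal_jacobian_apply)

lemma pullback_metric_eq_half_plane_map:
  assumes "s\<^sup>2 = 1"
  shows "pullback_metric_eq (half_plane_map s X0) h (H0_set h)"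
  unfolding pullback_metric_eq_def
proof
  fix p assume "p \<in> H0_set h"
  then have "snd p > 0" by (auto simp: H0_set_def)
  let ?z = "complex_lift u1 u1' p"
  have "cmod ?z > 0" using complex_lift_u1_nonzero \<open>snd p > 0\<close> by simp
  have metric: "g_poincare (half_plane_map s X0 p)
      (conformal_jacobian s (inverse (?z\<^sup>2)) ((snd p)\<^sup>2 - h (fst p)) v)
      (conformal_jacobian s (inverse (?z\<^sup>2)) ((snd p)\<^sup>2 - h (fst p)) w) = g_h h p v w" for v w
  proof -
    let ?K = "((snd p)\<^sup>2 - h (fst p))\<^sup>2 * fst v * fst w + snd v * snd w"
    have "g_poincare (half_plane_map s X0 p)
      (conformal_jacobian s (inverse (?z\<^sup>2)) ((snd p)\<^sup>2 - h (fst p)) v)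
      (conformal_jacobian s (inverse (?z\<^sup>2)) ((snd p)\<^sup>2 - h (fst p)) w)
        = (inverse ((cmod ?z)\<^sup>2))\<^sup>2 * ?K / (snd p / (cmod ?z)\<^sup>2)\<^sup>2"
      by (simp add: g_poincare_conformal_jacobian[OF assms] snd_half_plane_map norm_inverse norm_power)
    also have "\<dots> = ?K / (snd p)\<^sup>2"
      using \<open>cmod ?z > 0\<close> \<open>snd p > 0\<close> by (simp add: field_simps)
    also have "\<dots> = g_h h p v w"
      by (simp add: g_h_def power2_commute)
    finally show ?thesis .
  qed
  show "\<exists>D. (half_plane_map s X0 has_derivative D) (at p) \<and>
            (\<forall>v w. g_poincare (half_plane_map s X0 p) (D v) (D w) = g_h h p v w)"
  proof (intro exI conjI allI)
    show "(half_plane_map s X0 has_derivative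
        conformal_jacobian s (inverse (?z\<^sup>2)) ((snd p)\<^sup>2 - h (fst p))) (at p)"
      using \<open>snd p > 0\<close> by (intro half_plane_map_has_derivative) simp
  qed (rule metric)
qed

lemma local_diffeo_half_plane_map:
  assumes "s\<^sup>2 = 1"
  shows "local_diffeo (half_plane_map s X0) (H0_set h) upper_half_plane"
proof -
  define \<gamma> where "\<gamma> p = inverse ((complex_lift u1 u1' p)\<^sup>2)" for p
  define \<kappa> where "\<kappa> p = (snd p)\<^sup>2 - h (fst p)" for p
  have H0: "snd p > 0" "\<kappa> p \<noteq> 0" "complex_lift u1 u1' p \<noteq> 0" if "p \<in> H0_set h" for p
    using that complex_lift_u1_nonzero[of p] by (auto simp: H0_set_def \<kappa>_def)
  have cont_\<gamma>: "continuous_on (H0_set h) \<gamma>"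
    unfolding \<gamma>_def using H0(3) by (intro continuous_intros continuous_on_complex_lift[OF u1_deriv u1'_deriv]) simp
  have cont_\<kappa>: "continuous_on (H0_set h) \<kappa>"
    unfolding \<kappa>_def by (intro continuous_intros continuous_on_compose2[OF h_cont]) auto
  show ?thesis
  proof (rule local_diffeo_if_mat2_derivative[OF open_H0_set[OF h_cont],
        where a = "\<lambda>p. s * Re (\<gamma> p) * \<kappa> p" and b = "\<lambda>p. - s * Im (\<gamma> p)"
          and c = "\<lambda>p. Im (\<gamma> p) * \<kappa> p" and d = "\<lambda>p. Re (\<gamma> p)"])
    show "half_plane_map s X0 ` H0_set h \<subseteq> upper_half_plane"
      using H0 by (auto simp: upper_half_plane_def snd_half_plane_map case_prod_unfold)
    show "(half_plane_map s X0 has_derivative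
        mat2 (s * Re (\<gamma> p) * \<kappa> p) (- s * Im (\<gamma> p)) (Im (\<gamma> p) * \<kappa> p) (Re (\<gamma> p))) (at p)"
      if "p \<in> H0_set h" for p
      using half_plane_map_has_derivative[of p s X0] H0(1)[OF that]
      by (simp add: conformal_jacobian_def \<gamma>_def \<kappa>_def)
    show "s * Re (\<gamma> p) * \<kappa> p * Re (\<gamma> p) - - s * Im (\<gamma> p) * (Im (\<gamma> p) * \<kappa> p) \<noteq> 0"
      if "p \<in> H0_set h" for p
    proof -
      have "s * Re (\<gamma> p) * \<kappa> p * Re (\<gamma> p) - - s * Im (\<gamma> p) * (Im (\<gamma> p) * \<kappa> p)
          = s * \<kappa> p * (cmod (\<gamma> p))\<^sup>2"
        unfolding cmod_power2 by (simp add: algebra_simps power2_eq_square)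
      moreover have "\<gamma> p \<noteq> 0"
        using H0(3)[OF that] by (simp add: \<gamma>_def)
      ultimately show ?thesis
        using assms H0(2)[OF that] by auto
    qed
  qed (intro continuous_intros cont_\<gamma> cont_\<kappa>)+
qed

end

theorem lemma2p14:
  fixes h u1 u2 u1' u2' :: "real \<Rightarrow> real" and W X0 s :: real
  assumes h_cont: "continuous_on UNIV h"
    and d1: "\<And>x. (u1 has_real_derivative u1' x) (at x)"
    and d1': "\<And>x. (u1' has_real_derivative (- h x * u1 x)) (at x)"
    and d2: "\<And>x. (u2 has_real_derivative u2' x) (at x)"
    and d2': "\<And>x. (u2' has_real_derivative (- h x * u2 x)) (at x)"
    and lin_indep: "\<And>a b. (\<forall>x. a * u1 x + b * u2 x = 0) \<Longrightarrow> a = 0 \<and> b = 0"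
    and wronskian: "\<And>x. u1' x * u2 x - u1 x * u2' x = W"
    and W_nz: "W \<noteq> 0"
    and sign: "s = 1 \<or> s = -1"
  shows "let F = (\<lambda>(x, \<Phi>).
             (X0 + s * inverse W * ((\<Phi>\<^sup>2 * u1 x * u2 x + u1' x * u2' x) / (\<Phi>\<^sup>2 * (u1 x)\<^sup>2 + (u1' x)\<^sup>2)),
              \<Phi> / (\<Phi>\<^sup>2 * (u1 x)\<^sup>2 + (u1' x)\<^sup>2)))
         in local_diffeo F (H0_set h) upper_half_plane \<and> pullback_metric_eq F h (H0_set h)"
proof -
  interpret wronskian_pair h u1 u2 u1' u2' W
    using h_cont d1 d1' d2 d2' wronskian W_nz by unfold_locales
  have "s\<^sup>2 = 1"
    using sign by auto
  then show ?thesis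
    unfolding Let_def half_plane_map_eq[symmetric]
    using local_diffeo_half_plane_map pullback_metric_eq_half_plane_map by blast
qed

end
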